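(* Let $\sigma$ be a finite relational signature and $n\le k$ positive integers. Then $(\mathbb{H}_{n,k},\epsilon^{n,k},\delta^{n,k})$ is a comonad on the category $\mathcal{R}(\sigma)$ of $\sigma$-structures and homomorphisms.
   Context: For $m\in\mathbb{N}$, $[m]=\{1,\dots,m\}$. For a $\sigma$-structure $\mathcal{A}$, $\mathbb{T}_k\mathcal{A}$ is the $\sigma$-structure whose universe is the set of nonempty finite lists over $A\times[k]$; $\epsilon_{\mathcal{A}}(s)$ is the first component of the last pair of $s$; a tuple $(s_1,\dots,s_r)$ is in $R^{\mathbb{T}_k\mathcal{A}}$ iff the $s_i$ are pairwise comparable in the prefix order, $(\epsilon_{\mathcal{A}}(s_1),\dots,\epsilon_{\mathcal{A}}(s_r))\in R^{\mathcal{A}}$, and whenever $s_i$ is a prefix of $s_j$ and $s_i$ ends with a pair $(a,p)$, no prefix of $s_j$ properly extending $s_i$ ends with a pair $(a',p)$ for any $a'\in A$. For a homomorphism $f$, $\mathbb{T}_kf$ applies $f$ to the first component of every pair. $\delta_{\mathcal{A}}:\mathbb{T}_k\mathcal{A}\to\mathbb{T}_k\mathbb{T}_k\mathcal{A}$ sends $[(a_1,p_1),\dots,(a_m,p_m)]$ to $[(s_1,p_1),\dots,(s_m,p_m)]$ where $s_i=[(a_1,p_1),\dots,(a_i,p_i)]$. A list in $(A\times[k])^{*}$ is basic if it has at most $n$ pairs and its pebble indices (second components) are pairwise distinct. The map $S_n$ from lists over $A\times[k]$ to lists of basic lists is defined by: $S_n(s)=[s]$ if $s$ is basic; otherwise $S_n(s)=[a];S_n(t)$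 where $s=a\cdot t$ and $a$ is the longest basic prefix of $s$ (here $\cdot$ is concatenation and $x;\ell$ / $\ell;x$ denote prepending/appending an element). For a list $s$ and $p\in[k]$, write $S_n(s)=t;[s']$ with $s'$ its last block, and set $\alpha_n(s,p)=t;[s']$ if $|s'|=n$ or $p$ occurs as a pebble index in $s'$, and $\alpha_n(s,p)=t$ otherwise. The relation $\approx_n$ on $\mathbb{T}_k\mathcal{A}$ is: $[s;(a,i)]\approx_n[t;(b,j)]$ iff $a=b$ and $\alpha_n(s,i)=\alpha_n(t,j)$. $\mathbb{H}_{n,k}\mathcal{A}=\mathbb{T}_k\mathcal{A}/{\approx_n}$, where a tuple of equivalence classes is in $R$ iff some choice of representatives is in $R^{\mathbb{T}_k\mathcal{A}}$; $q_n:\mathbb{T}_k\mathcal{A}\to\mathbb{H}_{n,k}\mathcal{A}$ is the quotient map, and $\mathbb{H}_{n,k}f$ is the map induced by $\mathbb{T}_kf$ on classes. The counit $\epsilon^{n,k}_{\mathcal{A}}:\mathbb{H}_{n,k}\mathcal{A}\to\mathcal{A}$ is determined by $\epsilon_{\mathcal{A}}=\epsilon^{n,k}_{\mathcal{A}}\circ q_n$, and the comultiplication $\delta^{n,k}_{\mathcal{A}}:\mathbb{H}_{n,k}\mathcal{A}\to\mathbb{H}_{n,k}\mathbb{H}_{n,k}\mathcal{A}$ is determined by $\delta^{n,k}_{\mathcal{A}}\circ q_n=q_n\circ\mathbb{T}_k q_n\circ\delta_{\mathcal{A}}$ (the outer $q_n$ being the quotient map for $\mathbb{H}_{n,k}\mathcal{A}$).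 *)

theory Defs
  imports Main "HOL-Library.Sublist"
begin

text \<open>sigma-structures: a universe and, for every relation symbol, a set of tuples (as lists).
  The signature is given by an arity function on a (finite) type of relation symbols.\<close>

record ('a, 'r) struc =
  univ :: "'a set"
  rels :: "'r \<Rightarrow> 'a list set"

definition is_struc :: "('r \<Rightarrow> nat) \<Rightarrow> ('a, 'r) struc \<Rightarrow> bool" where
  "is_struc ar A \<longleftrightarrow> (\<forall>R. \<forall>t\<in>rels A R. length t = ar R \<and> set t \<subseteq> univ A)"

definition is_hom :: "('a, 'r) struc \<Rightarrow> ('b, 'r) struc \<Rightarrow> ('a \<Rightarrow> 'b) \<Rightarrow> bool" where
  "is_hom A B f \<longleftrightarrow> f ` univ A \<subseteq> univ B \<and> (\<forall>R. \<forall>t\<in>rels A R. map f t \<in> rels B R)"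

type_synonym 'a plist = "('a \<times> nat) list"

definition eps_T :: "'a plist \<Rightarrow> 'a" where
  "eps_T s = fst (last s)"

definition pebble_ok :: "'a plist list \<Rightarrow> bool" where
  "pebble_ok ss \<longleftrightarrow> (\<forall>i<length ss. \<forall>j<length ss. prefix (ss!i) (ss!j) \<longrightarrow>
      (\<forall>u. prefix u (ss!j) \<and> strict_prefix (ss!i) u \<longrightarrow> snd (last u) \<noteq> snd (last (ss!i))))"

definition Tk :: "nat \<Rightarrow> ('a, 'r) struc \<Rightarrow> ('a plist, 'r) struc" where
  "Tk k A = \<lparr> univ = {s. s \<noteq> [] \<and> set s \<subseteq> univ A \<times> {1..k}},
              rels = (\<lambda>R. {ss. (\<forall>s\<in>set ss. s \<noteq> [] \<and> set s \<subseteq> univ A \<times> {1..k})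
                           \<and> (\<forall>s\<in>set ss. \<forall>t\<in>set ss. prefix s t \<or> prefix t s)
                           \<and> map eps_T ss \<in> rels A R
                           \<and> pebble_ok ss}) \<rparr>"

definition Tmap :: "('a \<Rightarrow> 'b) \<Rightarrow> 'a plist \<Rightarrow> 'b plist" where
  "Tmap f s = map (\<lambda>(a, p). (f a, p)) s"

definition delta_T :: "'a plist \<Rightarrow> 'a plist plist" where
  "delta_T s = map (\<lambda>i. (take (Suc i) s, snd (s!i))) [0..<length s]"

definition basic :: "nat \<Rightarrow> 'a plist \<Rightarrow> bool" where
  "basic n s \<longleftrightarrow> length s \<le> n \<and> distinct (map snd s)"

definition lbp :: "nat \<Rightarrow> 'a plist \<Rightarrow> nat" where
  "lbp n s = Max {m. m \<le> length s \<and> basic n (take m s)}"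

text \<open>S_n, computed with fuel (length of the list); for n \<ge> 1 the fuel never runs out
  before a basic list is reached, so this coincides with the recursive definition.\<close>
fun S_fuel :: "nat \<Rightarrow> nat \<Rightarrow> 'a plist \<Rightarrow> 'a plist list" where
  "S_fuel 0 n s = [s]"
| "S_fuel (Suc f) n s =
     (if basic n s then [s] else take (lbp n s) s # S_fuel f n (drop (lbp n s) s))"

definition S :: "nat \<Rightarrow> 'a plist \<Rightarrow> 'a plist list" where
  "S n s = S_fuel (length s) n s"

definition alpha :: "nat \<Rightarrow> 'a plist \<Rightarrow> nat \<Rightarrow> 'a plist list" where
  "alpha n s p = (let L = S n s; s' = last L in
                  if length s' = n \<or> p \<in> snd ` set s' then L else butlast L)"

definition approx :: "nat \<Rightarrow> 'a plist \<Rightarrow> 'a plist \<Rightarrow> bool" where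
  "approx n x y \<longleftrightarrow> fst (last x) = fst (last y)
       \<and> alpha n (butlast x) (snd (last x)) = alpha n (butlast y) (snd (last y))"

definition qcls :: "nat \<Rightarrow> nat \<Rightarrow> ('a, 'r) struc \<Rightarrow> 'a plist \<Rightarrow> 'a plist set" where
  "qcls n k A s = {t \<in> univ (Tk k A). approx n s t}"

definition H :: "nat \<Rightarrow> nat \<Rightarrow> ('a, 'r) struc \<Rightarrow> ('a plist set, 'r) struc" where
  "H n k A = \<lparr> univ = qcls n k A ` univ (Tk k A),
               rels = (\<lambda>R. map (qcls n k A) ` rels (Tk k A) R) \<rparr>"

definition Hmap :: "nat \<Rightarrow> nat \<Rightarrow> ('b, 'r) struc \<Rightarrow> ('a \<Rightarrow> 'b) \<Rightarrow> 'a plist set \<Rightarrow> 'b plist set" where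
  "Hmap n k B f c = qcls n k B (Tmap f (SOME s. s \<in> c))"

definition epsH :: "'a plist set \<Rightarrow> 'a" where
  "epsH c = eps_T (SOME s. s \<in> c)"

definition deltaH :: "nat \<Rightarrow> nat \<Rightarrow> ('a, 'r) struc \<Rightarrow> 'a plist set \<Rightarrow> 'a plist set plist set" where
  "deltaH n k A c = qcls n k (H n k A) (Tmap (qcls n k A) (delta_T (SOME s. s \<in> c)))"

end

theory Submission
  imports Defs
begin

text \<open>Both \<open>T\<^sub>k f\<close> and \<open>T\<^sub>k q\<^sub>n \<circ> \<delta>\<close> relabel every position of a play by a function of the
  prefix ending there and keep the pebble indices. The decomposition \<open>S\<^sub>n\<close>, hence \<open>\<alpha>\<^sub>n\<close>, depends
  only on the sequence of pebble indices, so two \<open>\<approx>\<^sub>n\<close>-equivalent plays stay equivalent under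
  any such relabelling that agrees on the two plays themselves. Therefore \<open>H\<^sub>n\<^sub>,\<^sub>k f\<close>,
  \<open>\<epsilon>\<^sup>n\<^sup>,\<^sup>k\<close> and \<open>\<delta>\<^sup>n\<^sup>,\<^sup>k\<close> can be computed on arbitrary representatives, and the comonad
  laws descend from the corresponding identities between relabellings of a single play.\<close>

section \<open>Relabelling plays along their prefixes\<close>

definition relabel :: "('a plist \<Rightarrow> 'b) \<Rightarrow> 'a plist \<Rightarrow> 'b plist" where
  "relabel h x = map (\<lambda>i. (h (take (Suc i) x), snd (x ! i))) [0..<length x]"

lemma length_relabel [simp]: "length (relabel h x) = length x"
  by (simp add: relabel_def)

lemma nth_relabel [simp]: "i < length x \<Longrightarrow> relabel h x ! i = (h (take (Suc i) x), snd (x ! i))"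
  by (simp add: relabel_def)

lemma relabel_eq_Nil_iff [simp]: "relabel h x = [] \<longleftrightarrow> x = []"
  by (metis length_relabel length_0_conv)

lemma map_snd_relabel [simp]: "map snd (relabel h x) = map snd x"
  by (rule nth_equalityI) auto

lemma take_relabel: "take m (relabel h x) = relabel h (take m x)"
proof (rule nth_equalityI)
  fix i
  assume "i < length (take m (relabel h x))"
  then have "i < m" "i < length x"
    by auto
  then show "take m (relabel h x) ! i = relabel h (take m x) ! i"
    by (simp add: min_def)
qed simp

lemma butlast_relabel: "butlast (relabel h x) = relabel h (butlast x)"
  by (simp add: butlast_conv_take take_relabel)

lemma last_relabel: "x \<noteq> [] \<Longrightarrow> last (relabel h x) = (h x, snd (last x))"
  by (simp add: last_conv_nth)

lemma eps_T_relabel: "x \<noteq> [] \<Longrightarrow> eps_T (relabel h x) = h x"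
  by (simp add: eps_T_def last_relabel)

lemma relabel_cong:
  "(\<And>y. prefix y x \<Longrightarrow> y \<noteq> [] \<Longrightarrow> h y = h' y) \<Longrightarrow> relabel h x = relabel h' x"
proof (rule nth_equalityI)
  fix i
  assume agree: "\<And>y. prefix y x \<Longrightarrow> y \<noteq> [] \<Longrightarrow> h y = h' y"
    and "i < length (relabel h x)"
  then have "i < length x" and "take (Suc i) x \<noteq> []"
    by auto
  then show "relabel h x ! i = relabel h' x ! i"
    using agree[OF take_is_prefix] by simp
qed simp

lemma relabel_relabel: "relabel g (relabel h x) = relabel (\<lambda>y. g (relabel h y)) x"
  by (rule nth_equalityI) (auto simp: take_relabel)

lemma Tmap_eq_relabel: "Tmap f = relabel (f \<circ> eps_T)"
  by (rule ext, rule nth_equalityI) (auto simp: Tmap_def eps_T_def take_Suc_conv_app_nth split: prod.splits)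

lemma Tmap_relabel: "Tmap g (relabel h x) = relabel (g \<circ> h) x"
  unfolding Tmap_eq_relabel relabel_relabel
  by (rule relabel_cong) (simp add: eps_T_relabel)

lemma relabel_Tmap: "relabel h (Tmap f x) = relabel (h \<circ> Tmap f) x"
  by (simp add: Tmap_eq_relabel relabel_relabel comp_def)

lemma Tmap_delta_T: "Tmap q (delta_T x) = relabel q x"
  by (rule nth_equalityI) (auto simp: Tmap_def delta_T_def split: prod.splits)

lemma relabel_eps_T: "relabel eps_T x = x"
  by (rule nth_equalityI) (auto simp: eps_T_def take_Suc_conv_app_nth)

lemma Tmap_id: "Tmap id s = s"
  by (simp add: Tmap_def case_prod_unfold)

lemma Tmap_Tmap: "Tmap g (Tmap f s) = Tmap (g \<circ> f) s"
  by (simp add: Tmap_def case_prod_unfold)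

lemma eps_T_Tmap: "s \<noteq> [] \<Longrightarrow> eps_T (Tmap f s) = f (eps_T s)"
  by (simp add: Tmap_def eps_T_def last_map case_prod_unfold)

lemma prefix_relabel: "prefix x y \<Longrightarrow> prefix (relabel h x) (relabel h y)"
  by (metis prefix_def append_eq_conv_conj take_relabel take_is_prefix)

lemma prefix_relabel_imp_prefix:
  assumes "prefix x y \<or> prefix y x" and "prefix (relabel h x) (relabel h y)"
  shows "prefix x y"
  using assms by (metis length_relabel prefix_length_le prefix_length_prefix prefix_order.order_refl)

lemma pebble_ok_relabel:
  assumes chain: "\<forall>s\<in>set ss. \<forall>t\<in>set ss. prefix s t \<or> prefix t s"
    and ok: "pebble_ok ss" and nonempty: "\<forall>s\<in>set ss. s \<noteq> []"
  shows "pebble_ok (map (relabel h) ss)"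
  unfolding pebble_ok_def
proof (intro allI impI)
  fix i j u
  assume "i < length (map (relabel h) ss)" "j < length (map (relabel h) ss)"
  then have i: "i < length ss" and j: "j < length ss" by auto
  assume "prefix (map (relabel h) ss ! i) (map (relabel h) ss ! j)"
    and "prefix u (map (relabel h) ss ! j) \<and> strict_prefix (map (relabel h) ss ! i) u"
  then have ij: "prefix (relabel h (ss!i)) (relabel h (ss!j))"
    and u_j: "prefix u (relabel h (ss!j))" and i_u: "strict_prefix (relabel h (ss!i)) u"
    using i j by auto
  have prefix_ij: "prefix (ss!i) (ss!j)"
    using prefix_relabel_imp_prefix[OF _ ij] chain i j by simp
  define v where "v = take (length u) (ss!j)"
  have u: "u = relabel h v"
    using u_j unfolding v_def by (metis prefix_def append_eq_conv_conj take_relabel)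
  have v_j: "prefix v (ss!j)"
    by (simp add: v_def take_is_prefix)
  have "length (ss!i) < length v"
    using prefix_length_less[OF i_u] u by simp
  then have i_v: "strict_prefix (ss!i) v"
    using prefix_length_prefix[OF prefix_ij v_j] by (auto simp: strict_prefix_def)
  then have "snd (last v) \<noteq> snd (last (ss!i))"
    using ok i j prefix_ij v_j unfolding pebble_ok_def by blast
  moreover have "v \<noteq> []" and "ss!i \<noteq> []"
    using i_v nonempty i by auto
  ultimately show "snd (last u) \<noteq> snd (last (map (relabel h) ss ! i))"
    using u i by (simp add: last_relabel)
qed

section \<open>Blocks of a play depend only on its pebble indices\<close>

fun chop :: "nat list \<Rightarrow> 'a list \<Rightarrow> 'a list list" where
  "chop [] xs = []"
| "chop (l # ls) xs = take l xs # chop ls (drop l xs)"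

lemma map_snd_chop:
  "map snd xs = map snd ys \<Longrightarrow> map (map snd) (chop ls xs) = map (map snd) (chop ls ys)"
proof (induction ls arbitrary: xs ys)
  case (Cons l ls)
  have "map snd (drop l xs) = map snd (drop l ys)"
    by (simp add: drop_map[symmetric] Cons.prems)
  then show ?case
    using Cons by (simp add: take_map[symmetric])
qed simp

lemma butlast_chop: "butlast (chop ls xs) = chop (butlast ls) xs"
  by (induction ls arbitrary: xs) (auto, metis chop.simps(2) neq_Nil_conv list.distinct(1))

lemma chop_take_sum_list: "chop ls (take (sum_list ls) xs) = chop ls xs"
  by (induction ls arbitrary: xs) (auto simp: drop_take min_def)

lemma basic_cong: "map snd xs = map snd ys \<Longrightarrow> basic n xs = basic n ys"
  unfolding basic_def by (metis length_map)

lemma lbp_cong: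
  assumes "map snd xs = map snd ys"
  shows "lbp n xs = lbp n ys"
proof -
  have "basic n (take m xs) = basic n (take m ys)" for m
    by (rule basic_cong) (simp add: take_map[symmetric] assms)
  moreover have "length xs = length ys"
    using assms by (metis length_map)
  ultimately show ?thesis
    by (simp add: lbp_def)
qed

lemma lbp_le_length: "lbp n s \<le> length s"
proof -
  have "finite {m. m \<le> length s \<and> basic n (take m s)}"
    by (rule finite_subset[of _ "{..length s}"]) auto
  moreover have "0 \<in> {m. m \<le> length s \<and> basic n (take m s)}"
    by (simp add: basic_def)
  ultimately show ?thesis
    unfolding lbp_def by (metis (mono_tags, lifting) Max_in empty_iff mem_Collect_eq)
qed

lemma S_fuel_eq_chop:
  "map snd xs = map snd ys \<Longrightarrow> S_fuel f n ys = chop (map length (S_fuel f n xs)) ys"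
proof (induction f arbitrary: xs ys)
  case 0
  then show ?case
    by (simp, metis length_map take_all_iff order_refl)
next
  case (Suc f)
  have "map snd (drop (lbp n xs) xs) = map snd (drop (lbp n xs) ys)"
    by (simp add: drop_map[symmetric] Suc.prems)
  moreover have "length xs = length ys"
    using Suc.prems by (metis length_map)
  ultimately show ?case
    using basic_cong[OF Suc.prems] lbp_cong[OF Suc.prems] lbp_le_length[of n xs] Suc.IH
    by (auto simp: min_def)
qed

lemma S_eq_chop: "map snd xs = map snd ys \<Longrightarrow> S n ys = chop (map length (S n xs)) ys"
  unfolding S_def by (metis S_fuel_eq_chop length_map)

lemma concat_S: "concat (S n s) = s"
proof -
  have "concat (S_fuel f n s) = s" for f
    by (induction f arbitrary: s) auto
  then show ?thesis
    by (simp add: S_def)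
qed

lemma S_neq_Nil: "S n s \<noteq> []"
  by (cases s) (auto simp: S_def)

lemma alpha_eq_chop:
  assumes "map snd xs = map snd ys"
  shows "alpha n ys p = chop (map length (alpha n xs p)) ys"
proof -
  have Sy: "S n ys = chop (map length (S n xs)) ys" and Sx: "S n xs = chop (map length (S n xs)) xs"
    using S_eq_chop[OF assms] S_eq_chop[of xs xs] by simp_all
  have "map (map snd) (S n ys) = map (map snd) (S n xs)"
    using Sx Sy map_snd_chop[OF assms] by metis
  then have "map snd (last (S n ys)) = map snd (last (S n xs))"
    using S_neq_Nil by (metis last_map)
  then have "(length (last (S n ys)) = n \<or> p \<in> snd ` set (last (S n ys)))
      \<longleftrightarrow> (length (last (S n xs)) = n \<or> p \<in> snd ` set (last (S n xs)))"
    by (metis length_map list.set_map)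
  then show ?thesis
    unfolding alpha_def Let_def using Sy by (simp add: butlast_chop map_butlast)
qed

lemma take_sum_lengths_alpha: "take (sum_list (map length (alpha n xs p))) xs = concat (alpha n xs p)"
proof -
  have "xs = concat (butlast (S n xs)) @ last (S n xs)"
    using concat_S[of n xs] S_neq_Nil append_butlast_last_id by (metis concat.simps concat_append append_Nil2)
  then have "prefix (concat (alpha n xs p)) xs"
    unfolding alpha_def Let_def using concat_S[of n xs] by (auto simp: prefix_def)
  then show ?thesis
    by (metis append_eq_conv_conj length_concat prefix_def)
qed

lemma alpha_relabel:
  "alpha n (relabel h xs) p = chop (map length (alpha n xs p)) (relabel h (concat (alpha n xs p)))"
proof -
  let ?ls = "map length (alpha n xs p)"
  have "alpha n (relabel h xs) p = chop ?ls (relabel h xs)"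
    by (rule alpha_eq_chop) simp
  also have "\<dots> = chop ?ls (take (sum_list ?ls) (relabel h xs))"
    by (rule chop_take_sum_list[symmetric])
  finally show ?thesis
    by (simp add: take_relabel take_sum_lengths_alpha)
qed

lemma approx_relabel:
  assumes "x \<noteq> []" "y \<noteq> []" "approx n x y" "h x = h y"
  shows "approx n (relabel h x) (relabel h y)"
  using assms by (simp add: approx_def last_relabel butlast_relabel alpha_relabel)

lemma mem_univ_Tk: "s \<in> univ (Tk k A) \<longleftrightarrow> s \<noteq> [] \<and> set s \<subseteq> univ A \<times> {1..k}"
  by (simp add: Tk_def)

lemma mem_rels_Tk:
  "ss \<in> rels (Tk k A) R \<longleftrightarrow> (\<forall>s\<in>set ss. s \<in> univ (Tk k A))
     \<and> (\<forall>s\<in>set ss. \<forall>t\<in>set ss. prefix s t \<or> prefix t s)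
     \<and> map eps_T ss \<in> rels A R \<and> pebble_ok ss"
  by (simp add: Tk_def)

lemma univ_H: "univ (H n k A) = qcls n k A ` univ (Tk k A)"
  by (simp add: H_def)

lemma rels_H: "rels (H n k A) R = map (qcls n k A) ` rels (Tk k A) R"
  by (simp add: H_def)

lemma univ_H_E:
  assumes "c \<in> univ (H n k A)"
  obtains s where "s \<in> univ (Tk k A)" and "c = qcls n k A s"
  using assms by (auto simp: univ_H)

lemma prefix_in_univ_Tk: "s \<in> univ (Tk k A) \<Longrightarrow> prefix t s \<Longrightarrow> t \<noteq> [] \<Longrightarrow> t \<in> univ (Tk k A)"
  by (auto simp: mem_univ_Tk dest: set_mono_prefix)

lemma eps_T_in_univ: "s \<in> univ (Tk k A) \<Longrightarrow> eps_T s \<in> univ A"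
  by (auto simp: mem_univ_Tk eps_T_def dest!: last_in_set)

lemma relabel_cong_univ:
  "s \<in> univ (Tk k A) \<Longrightarrow> (\<And>t. t \<in> univ (Tk k A) \<Longrightarrow> h t = h' t) \<Longrightarrow> relabel h s = relabel h' s"
  by (metis relabel_cong prefix_in_univ_Tk)

lemma relabel_in_univ_Tk:
  assumes s: "s \<in> univ (Tk k A)" and h: "h ` univ (Tk k A) \<subseteq> univ B"
  shows "relabel h s \<in> univ (Tk k B)"
proof -
  have "set (relabel h s) \<subseteq> univ B \<times> {1..k}"
  proof
    fix z
    assume "z \<in> set (relabel h s)"
    then obtain i where i: "i < length s" and z: "z = (h (take (Suc i) s), snd (s ! i))"
      by (auto simp: in_set_conv_nth)
    have "take (Suc i) s \<in> univ (Tk k A)"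
      using i by (intro prefix_in_univ_Tk[OF s take_is_prefix]) auto
    moreover have "s ! i \<in> univ A \<times> {1..k}"
      using s i nth_mem by (force simp: mem_univ_Tk)
    ultimately show "z \<in> univ B \<times> {1..k}"
      using h z by auto
  qed
  then show ?thesis
    using s by (simp add: mem_univ_Tk)
qed

lemma Tmap_in_univ_Tk: "s \<in> univ (Tk k A) \<Longrightarrow> f ` univ A \<subseteq> univ B \<Longrightarrow> Tmap f s \<in> univ (Tk k B)"
  unfolding Tmap_eq_relabel by (rule relabel_in_univ_Tk) (auto simp: eps_T_in_univ)

lemma relabel_qcls_in_univ_Tk: "s \<in> univ (Tk k A) \<Longrightarrow> relabel (qcls n k A) s \<in> univ (Tk k (H n k A))"
  by (rule relabel_in_univ_Tk) (auto simp: univ_H)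

lemma is_hom_comp: "is_hom A B f \<Longrightarrow> is_hom B C g \<Longrightarrow> is_hom A C (g \<circ> f)"
  unfolding is_hom_def by (simp add: image_subset_iff flip: map_map)

lemma is_hom_eps_T: "is_hom (Tk k A) A eps_T"
  by (auto simp: is_hom_def mem_rels_Tk eps_T_in_univ)

lemma is_hom_qcls: "is_hom (Tk k A) (H n k A) (qcls n k A)"
  by (auto simp: is_hom_def univ_H rels_H)

text \<open>\<open>relabel h\<close> is the coKleisli extension \<open>T\<^sub>k h \<circ> \<delta>\<close> of \<open>h\<close>.\<close>

lemma is_hom_relabel:
  assumes h: "is_hom (Tk k A) B h"
  shows "is_hom (Tk k A) (Tk k B) (relabel h)"
  unfolding is_hom_def
proof (intro conjI allI ballI)
  have h_univ: "h ` univ (Tk k A) \<subseteq> univ B"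
    using h by (simp add: is_hom_def)
  then show "relabel h ` univ (Tk k A) \<subseteq> univ (Tk k B)"
    using relabel_in_univ_Tk by blast
  fix R ss
  assume ss: "ss \<in> rels (Tk k A) R"
  then have univ: "\<forall>s\<in>set ss. s \<in> univ (Tk k A)"
    and chain: "\<forall>s\<in>set ss. \<forall>t\<in>set ss. prefix s t \<or> prefix t s" and ok: "pebble_ok ss"
    by (auto simp: mem_rels_Tk)
  have "map eps_T (map (relabel h) ss) = map h ss"
    using univ by (simp add: mem_univ_Tk eps_T_relabel)
  also have "\<dots> \<in> rels B R"
    using h ss by (simp add: is_hom_def)
  finally have "map eps_T (map (relabel h) ss) \<in> rels B R" .
  moreover have "\<forall>s\<in>set (map (relabel h) ss). s \<in> univ (Tk k B)"
    using univ by (auto intro: relabel_in_univ_Tk[OF _ h_univ])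
  moreover have "\<forall>s\<in>set (map (relabel h) ss). \<forall>t\<in>set (map (relabel h) ss). prefix s t \<or> prefix t s"
    using chain prefix_relabel by fastforce
  moreover have "pebble_ok (map (relabel h) ss)"
    using pebble_ok_relabel[OF chain ok] univ by (simp add: mem_univ_Tk)
  ultimately show "map (relabel h) ss \<in> rels (Tk k B) R"
    unfolding mem_rels_Tk by blast
qed

lemma is_hom_Tmap: "is_hom A B f \<Longrightarrow> is_hom (Tk k A) (Tk k B) (Tmap f)"
  unfolding Tmap_eq_relabel by (intro is_hom_relabel is_hom_comp[OF is_hom_eps_T])

lemma is_hom_H_descend:
  assumes h: "is_hom (Tk k A) B h" and F: "\<And>s. s \<in> univ (Tk k A) \<Longrightarrow> F (qcls n k A s) = h s"
  shows "is_hom (H n k A) B F"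
  unfolding is_hom_def
proof (intro conjI allI ballI)
  show "F ` univ (H n k A) \<subseteq> univ B"
    using h F by (auto simp: is_hom_def univ_H)
  fix R t
  assume "t \<in> rels (H n k A) R"
  then obtain ss where ss: "ss \<in> rels (Tk k A) R" and t: "t = map (qcls n k A) ss"
    by (auto simp: rels_H)
  have "map F t = map h ss"
    using ss F by (auto simp: t mem_rels_Tk)
  then show "map F t \<in> rels B R"
    using h ss by (simp add: is_hom_def)
qed

lemma qcls_eqI: "approx n x y \<Longrightarrow> qcls n k A x = qcls n k A y"
  unfolding qcls_def approx_def by auto

lemma some_in_qcls:
  assumes "s \<in> univ (Tk k A)"
  obtains "(SOME t. t \<in> qcls n k A s) \<in> univ (Tk k A)" and "approx n s (SOME t. t \<in> qcls n k A s)"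
proof -
  have "s \<in> qcls n k A s"
    using assms by (simp add: qcls_def approx_def)
  then have "(SOME t. t \<in> qcls n k A s) \<in> qcls n k A s"
    by (rule someI)
  then show ?thesis
    using that by (simp add: qcls_def)
qed

lemma Hmap_qcls:
  assumes "s \<in> univ (Tk k A)"
  shows "Hmap n k B f (qcls n k A s) = qcls n k B (Tmap f s)"
proof -
  obtain t where "t \<in> univ (Tk k A)" "approx n s t" and "t = (SOME t. t \<in> qcls n k A s)"
    using some_in_qcls[OF assms] by metis
  then have "approx n (Tmap f t) (Tmap f s)"
    unfolding Tmap_eq_relabel
    by (intro approx_relabel) (use assms in \<open>auto simp: mem_univ_Tk approx_def eps_T_def\<close>)
  then show ?thesis
    unfolding Hmap_def \<open>t = _\<close>[symmetric] by (rule qcls_eqI)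
qed

lemma epsH_qcls: "s \<in> univ (Tk k A) \<Longrightarrow> epsH (qcls n k A s) = eps_T s"
  by (rule some_in_qcls[of s k A n]) (auto simp: epsH_def approx_def eps_T_def)

lemma deltaH_qcls:
  assumes "s \<in> univ (Tk k A)"
  shows "deltaH n k A (qcls n k A s) = qcls n k (H n k A) (relabel (qcls n k A) s)"
proof -
  obtain t where "t \<in> univ (Tk k A)" "approx n s t" and "t = (SOME t. t \<in> qcls n k A s)"
    using some_in_qcls[OF assms] by metis
  then have "approx n (relabel (qcls n k A) t) (relabel (qcls n k A) s)"
    by (intro approx_relabel) (use assms qcls_eqI[of n t s] in \<open>auto simp: mem_univ_Tk approx_def\<close>)
  then show ?thesis
    unfolding deltaH_def Tmap_delta_T \<open>t = _\<close>[symmetric] by (rule qcls_eqI)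
qed

lemma is_struc_H:
  assumes "is_struc ar A"
  shows "is_struc ar (H n k A)"
  unfolding is_struc_def
proof (intro allI ballI conjI)
  fix R t
  assume "t \<in> rels (H n k A) R"
  then obtain ss where ss: "ss \<in> rels (Tk k A) R" and t: "t = map (qcls n k A) ss"
    by (auto simp: rels_H)
  then have "length (map eps_T ss) = ar R"
    using assms unfolding is_struc_def mem_rels_Tk by blast
  then show "length t = ar R"
    by (simp add: t)
  show "set t \<subseteq> univ (H n k A)"
    using ss by (auto simp: t mem_rels_Tk univ_H)
qed

lemma is_hom_Hmap: "is_hom A B f \<Longrightarrow> is_hom (H n k A) (H n k B) (Hmap n k B f)"
  by (rule is_hom_H_descend[OF is_hom_comp[OF is_hom_Tmap is_hom_qcls]]) (simp_all add: Hmap_qcls)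

lemma is_hom_epsH: "is_hom (H n k A) A epsH"
  by (rule is_hom_H_descend[OF is_hom_eps_T]) (rule epsH_qcls)

lemma is_hom_deltaH: "is_hom (H n k A) (H n k (H n k A)) (deltaH n k A)"
  by (rule is_hom_H_descend[OF is_hom_comp[OF is_hom_relabel[OF is_hom_qcls] is_hom_qcls]])
    (simp add: deltaH_qcls)

lemma Hmap_id: "c \<in> univ (H n k A) \<Longrightarrow> Hmap n k A id c = c"
  by (erule univ_H_E) (simp add: Hmap_qcls Tmap_id)

lemma Hmap_comp:
  assumes "f ` univ A \<subseteq> univ B" and "c \<in> univ (H n k A)"
  shows "Hmap n k C (g \<circ> f) c = Hmap n k C g (Hmap n k B f c)"
  using assms(2) by (rule univ_H_E) (simp add: Hmap_qcls Tmap_in_univ_Tk[OF _ assms(1)] Tmap_Tmap)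

lemma epsH_Hmap:
  assumes f: "f ` univ A \<subseteq> univ B" and "c \<in> univ (H n k A)"
  shows "epsH (Hmap n k B f c) = f (epsH c)"
proof -
  obtain s where s: "s \<in> univ (Tk k A)" and c: "c = qcls n k A s"
    using assms(2) by (rule univ_H_E)
  then have "s \<noteq> []"
    by (simp add: mem_univ_Tk)
  then show ?thesis
    by (simp add: c Hmap_qcls[OF s] epsH_qcls[OF s] epsH_qcls[OF Tmap_in_univ_Tk[OF s f]] eps_T_Tmap)
qed

lemma deltaH_Hmap:
  assumes f: "f ` univ A \<subseteq> univ B" and "c \<in> univ (H n k A)"
  shows "deltaH n k B (Hmap n k B f c) = Hmap n k (H n k B) (Hmap n k B f) (deltaH n k A c)"
proof -
  obtain s where s: "s \<in> univ (Tk k A)" and c: "c = qcls n k A s"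
    using assms(2) by (rule univ_H_E)
  have "relabel (qcls n k B) (Tmap f s) = Tmap (Hmap n k B f) (relabel (qcls n k A) s)"
    unfolding relabel_Tmap Tmap_relabel by (rule relabel_cong_univ[OF s]) (simp add: Hmap_qcls)
  then show ?thesis
    by (simp add: c s Hmap_qcls deltaH_qcls Tmap_in_univ_Tk[OF s f] relabel_qcls_in_univ_Tk)
qed

lemma epsH_deltaH:
  assumes "c \<in> univ (H n k A)"
  shows "epsH (deltaH n k A c) = c"
proof -
  obtain s where s: "s \<in> univ (Tk k A)" and c: "c = qcls n k A s"
    using assms by (rule univ_H_E)
  then have "s \<noteq> []"
    by (simp add: mem_univ_Tk)
  then show ?thesis
    by (simp add: c deltaH_qcls[OF s] epsH_qcls[OF relabel_qcls_in_univ_Tk[OF s]] eps_T_relabel)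
qed

lemma Hmap_epsH_deltaH: "c \<in> univ (H n k A) \<Longrightarrow> Hmap n k A epsH (deltaH n k A c) = c"
proof (erule univ_H_E)
  fix s
  assume s: "s \<in> univ (Tk k A)" and c: "c = qcls n k A s"
  have "Tmap epsH (relabel (qcls n k A) s) = relabel eps_T s"
    unfolding Tmap_relabel by (rule relabel_cong_univ[OF s]) (simp add: epsH_qcls)
  then show ?thesis
    by (simp add: c s deltaH_qcls Hmap_qcls relabel_qcls_in_univ_Tk relabel_eps_T)
qed

lemma deltaH_deltaH:
  assumes "c \<in> univ (H n k A)"
  shows "deltaH n k (H n k A) (deltaH n k A c) = Hmap n k (H n k (H n k A)) (deltaH n k A) (deltaH n k A c)"
proof -
  obtain s where s: "s \<in> univ (Tk k A)" and c: "c = qcls n k A s"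
    using assms by (rule univ_H_E)
  have "relabel (qcls n k (H n k A)) (relabel (qcls n k A) s) = Tmap (deltaH n k A) (relabel (qcls n k A) s)"
    unfolding relabel_relabel Tmap_relabel by (rule relabel_cong_univ[OF s]) (simp add: deltaH_qcls)
  then show ?thesis
    by (simp add: c s deltaH_qcls Hmap_qcls relabel_qcls_in_univ_Tk)
qed

theorem theorem3p12:
  fixes ar :: "'r \<Rightarrow> nat" and n k :: nat
  assumes "finite (UNIV :: 'r set)" and "1 \<le> n" and "n \<le> k"
  shows
  "(\<forall>A :: ('a, 'r) struc. is_struc ar A \<longrightarrow> is_struc ar (H n k A))
 \<and> (\<forall>(A :: ('a, 'r) struc) (B :: ('b, 'r) struc) f.
      is_struc ar A \<and> is_struc ar B \<and> is_hom A B f \<longrightarrow>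
        is_hom (H n k A) (H n k B) (Hmap n k B f)
        \<and> (\<forall>s\<in>univ (Tk k A). Hmap n k B f (qcls n k A s) = qcls n k B (Tmap f s)))
 \<and> (\<forall>A :: ('a, 'r) struc. is_struc ar A \<longrightarrow> (\<forall>c\<in>univ (H n k A). Hmap n k A id c = c))
 \<and> (\<forall>(A :: ('a, 'r) struc) (B :: ('b, 'r) struc) (C :: ('c, 'r) struc) f g.
      is_struc ar A \<and> is_struc ar B \<and> is_struc ar C \<and> is_hom A B f \<and> is_hom B C g \<longrightarrow>
        (\<forall>c\<in>univ (H n k A). Hmap n k C (g \<circ> f) c = Hmap n k C g (Hmap n k B f c)))
 \<and> (\<forall>A :: ('a, 'r) struc. is_struc ar A \<longrightarrow>
      is_hom (H n k A) A epsH \<and> (\<forall>s\<in>univ (Tk k A). epsH (qcls n k A s) = eps_T s))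
 \<and> (\<forall>(A :: ('a, 'r) struc) (B :: ('b, 'r) struc) f.
      is_struc ar A \<and> is_struc ar B \<and> is_hom A B f \<longrightarrow>
        (\<forall>c\<in>univ (H n k A). f (epsH c) = epsH (Hmap n k B f c)))
 \<and> (\<forall>A :: ('a, 'r) struc. is_struc ar A \<longrightarrow>
      is_hom (H n k A) (H n k (H n k A)) (deltaH n k A)
      \<and> (\<forall>s\<in>univ (Tk k A). deltaH n k A (qcls n k A s)
                            = qcls n k (H n k A) (Tmap (qcls n k A) (delta_T s))))
 \<and> (\<forall>(A :: ('a, 'r) struc) (B :: ('b, 'r) struc) f.
      is_struc ar A \<and> is_struc ar B \<and> is_hom A B f \<longrightarrow>
        (\<forall>c\<in>univ (H n k A). deltaH n k B (Hmap n k B f c)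
                             = Hmap n k (H n k B) (Hmap n k B f) (deltaH n k A c)))
 \<and> (\<forall>A :: ('a, 'r) struc. is_struc ar A \<longrightarrow>
      (\<forall>c\<in>univ (H n k A).
         epsH (deltaH n k A c) = c
       \<and> Hmap n k A epsH (deltaH n k A c) = c
       \<and> deltaH n k (H n k A) (deltaH n k A c)
           = Hmap n k (H n k (H n k A)) (deltaH n k A) (deltaH n k A c)))"
proof -
  have hom_image: "f ` univ A \<subseteq> univ B" if "is_hom A B f"
    for A :: "('x, 'r) struc" and B :: "('y, 'r) struc" and f
    using that by (simp add: is_hom_def)
  show ?thesis
    by (auto simp: is_struc_H is_hom_Hmap Hmap_qcls Hmap_id is_hom_epsH epsH_qcls is_hom_deltaH
        deltaH_qcls Tmap_delta_T epsH_deltaH Hmap_epsH_deltaH deltaH_deltaH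
        Hmap_comp[OF hom_image] epsH_Hmap[OF hom_image] deltaH_Hmap[OF hom_image])
qed

end
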